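(* Let $d\in\mathbb{N}$. For every $r\in\mathcal{R}$, $$\mathrm{WA}(r)=\pi(\Pi_r)\qquad\text{and hence}\qquad \mathrm{Bad}(r)=\mathbb{R}^d\setminus\pi(\Pi_r).$$
   Context: For $t\in\mathbb{R}$, $\|t\|$ is the distance from $t$ to $\mathbb{Z}$. Write $\mathbb{N}=\{1,2,\dots\}$. $\mathcal{R}=\{r\in\mathbb{R}^d: r_i\ge0,\ \sum_i r_i=1\}$. For $r\in\mathcal{R}$ and $x=(x_i)\in\mathbb{R}^d$, set $$\|x\|_r=\Big(\max_{1\le i\le d}\|x_i\|^{1/r_i}\Big)^{1/d}.$$ $\mathrm{Bad}(r)=\{x\in\mathbb{R}^d:\inf_{n\in\mathbb{N}}n\|nx\|_r^d>0\}$ and $\mathrm{WA}(r)=\mathbb{R}^d\setminus\mathrm{Bad}(r)$. $\mathcal{D}$ is the set of all non-increasing $\psi:\mathbb{N}\to\mathbb{R}_{\ge0}$ with $\sum_n\psi(n)^d=\infty$. For $\psi:\mathbb{N}\to\mathbb{R}_{\ge0}$, $W(r,\psi)$ is the set of $(x,y)\in\mathbb{R}^d\times\mathbb{R}^d$ such that $\|nx+y\|_r<\psi(n)$ for infinitely many $n\in\mathbb{N}$. Then $\Pi_r=\bigcap_{\psi\in\mathcal{D}}W(r,\psi)$. $\pi(x,y)=x$ is the projection onto the first factor. *)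

theory Defs
  imports "HOL-Analysis.Analysis"
begin

definition distZ :: "real \<Rightarrow> real" where
  "distZ t = infdist t \<int>"

definition weights :: "(real ^ 'd) set" where
  "weights = {r. (\<forall>i. r $ i \<ge> 0) \<and> (\<Sum>i\<in>UNIV. r $ i) = 1}"

text \<open>\<open>\<parallel>t\<parallel>^(1/r_i)\<close>, with the convention that the value is 0 when r_i = 0
  (the limit of \<open>s^(1/\<rho>)\<close> as \<open>\<rho>\<rightarrow>0+\<close> for \<open>0 \<le> s \<le> 1/2\<close>).\<close>
definition rpow_comp :: "real \<Rightarrow> real \<Rightarrow> real" where
  "rpow_comp t \<rho> = (if \<rho> = 0 then 0 else distZ t powr (1 / \<rho>))"

definition rnorm :: "real ^ 'd \<Rightarrow> real ^ 'd \<Rightarrow> real" where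
  "rnorm r x = (Max (range (\<lambda>i. rpow_comp (x $ i) (r $ i)))) powr (1 / real CARD('d))"

definition Bad :: "real ^ 'd \<Rightarrow> (real ^ 'd) set" where
  "Bad r = {x. (INF n\<in>{1::nat..}. real n * (rnorm r (real n *\<^sub>R x)) ^ CARD('d)) > 0}"

definition WA :: "real ^ 'd \<Rightarrow> (real ^ 'd) set" where
  "WA r = UNIV - Bad r"

text \<open>Non-increasing functions \<open>\<nat> \<rightarrow> \<real>\<^sub>\<ge>\<^sub>0\<close> with divergent \<open>\<Sum> \<psi>(n)^d\<close>; the value at 0 is irrelevant.\<close>
definition Dfun :: "'d itself \<Rightarrow> (nat \<Rightarrow> real) set" where
  "Dfun _ = {\<psi>. (\<forall>n\<ge>1. \<psi> n \<ge> 0) \<and> (\<forall>m n. 1 \<le> m \<and> m \<le> n \<longrightarrow> \<psi> n \<le> \<psi> m)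
               \<and> \<not> summable (\<lambda>n. \<psi> (n + 1) ^ CARD('d))}"

definition Wset :: "real ^ 'd \<Rightarrow> (nat \<Rightarrow> real) \<Rightarrow> ((real ^ 'd) \<times> (real ^ 'd)) set" where
  "Wset r \<psi> = {(x, y). infinite {n::nat. n \<ge> 1 \<and> rnorm r (real n *\<^sub>R x + y) < \<psi> n}}"

definition PiSet :: "real ^ 'd \<Rightarrow> ((real ^ 'd) \<times> (real ^ 'd)) set" where
  "PiSet r = (\<Inter>\<psi>\<in>Dfun TYPE('d). Wset r \<psi>)"

end

theory Submission
  imports Defs
begin

text \<open>Write \<open>rmax r v = max_i \<parallel>v_i\<parallel>^(1/r_i)\<close> for the \<open>d\<close>-th power of \<open>\<parallel>v\<parallel>_r\<close>; it satisfies a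
  quasi-triangle inequality with constant \<open>qt_const r\<close>.

  If \<open>x\<close> is badly approximable, say \<open>n rmax r (n x) \<ge> c\<close>, then for any \<open>y\<close> and \<open>m < n\<close> the values
  \<open>rmax r (k x + y)\<close> at \<open>k = m\<close> and \<open>k = n\<close> cannot both be below \<open>\<epsilon>/n\<close> (for small \<open>\<epsilon>\<close>), since
  together they control \<open>rmax r ((n - m) x)\<close>. Taking \<open>\<psi>(n)^d = \<epsilon>/n'\<close>, where \<open>n'\<close> is the next index
  after \<open>n\<close> with value below \<open>\<epsilon>/n'\<close>, gives a non-increasing \<open>\<psi>\<close> with \<open>\<Sum> \<psi>(n)^d = \<infinity>\<close> that is
  beaten at most once.

  If \<open>x\<close> is not badly approximable, choose denominators \<open>q_j\<close> with \<open>q_j rmax r (q_j x) < 2^-j\<close> and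
  \<open>rmax r (q_j x)\<close> decreasing geometrically. Summing the nearest-integer errors of the \<open>q_j x\<close> yields
  \<open>y\<close> with \<open>rmax r (N_k x + y) = O(rmax r (q_k x))\<close> at \<open>N_k = q_0 + \<dots> + q_(k-1)\<close>. Comparing a
  non-increasing \<open>\<psi>^d\<close> blockwise on \<open>[N_k, N_(k+1))\<close> then shows: if \<open>\<psi>(n) \<le> \<parallel>n x + y\<parallel>_r\<close> for all
  large \<open>n\<close>, then \<open>\<Sum> \<psi>(n)^d < \<infinity>\<close>. If \<open>rmax r (q x) = 0\<close> for some \<open>q\<close>, then \<open>y = 0\<close> works.\<close>

section \<open>Distance to the integers\<close>

lemma distZ_nonneg: "distZ t \<ge> 0"
  by (simp add: distZ_def infdist_nonneg)

lemma distZ_le_abs_diff: "z \<in> \<int> \<Longrightarrow> distZ t \<le> \<bar>t - z\<bar>"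
  unfolding distZ_def using infdist_le[of z \<int> t] by (simp add: dist_real_def)

lemma distZ_attained: "\<exists>z\<in>\<int>. distZ t = \<bar>t - z\<bar>"
proof -
  obtain z where "z \<in> (\<int>::real set)" "infdist t \<int> = dist t z"
    using infdist_attains_inf[of "\<int>::real set" t] closed_Ints by blast
  thus ?thesis unfolding distZ_def dist_real_def by blast
qed

lemma distZ_eq_0_iff: "distZ t = 0 \<longleftrightarrow> t \<in> \<int>"
  unfolding distZ_def using in_closed_iff_infdist_zero[of "\<int>::real set" t] closed_Ints by auto

lemma distZ_add_le: "distZ (s + t) \<le> distZ s + distZ t"
proof -
  obtain a b where "a \<in> \<int>" "distZ s = \<bar>s - a\<bar>" "b \<in> \<int>" "distZ t = \<bar>t - b\<bar>"
    using distZ_attained by metis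
  moreover have "distZ (s + t) \<le> \<bar>s + t - (a + b)\<bar>"
    using \<open>a \<in> \<int>\<close> \<open>b \<in> \<int>\<close> by (intro distZ_le_abs_diff) auto
  ultimately show ?thesis by simp
qed

lemma distZ_uminus: "distZ (- t) = distZ t"
proof -
  have le: "distZ (- u) \<le> distZ u" for u
  proof -
    obtain a where "a \<in> \<int>" "distZ u = \<bar>u - a\<bar>" using distZ_attained by metis
    moreover have "distZ (- u) \<le> \<bar>- u - (- a)\<bar>" using \<open>a \<in> \<int>\<close> by (intro distZ_le_abs_diff) auto
    ultimately show ?thesis by simp
  qed
  show ?thesis using le[of t] le[of "- t"] by simp
qed

lemma rpow_comp_nonneg: "rpow_comp t \<rho> \<ge> 0"
  by (simp add: rpow_comp_def)

lemma rpow_comp_le_iff: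
  assumes "\<rho> > 0" "M \<ge> 0"
  shows "rpow_comp t \<rho> \<le> M \<longleftrightarrow> distZ t \<le> M powr \<rho>"
proof
  assume "rpow_comp t \<rho> \<le> M"
  hence "(distZ t powr (1 / \<rho>)) powr \<rho> \<le> M powr \<rho>"
    using assms by (intro powr_mono2) (auto simp: rpow_comp_def)
  thus "distZ t \<le> M powr \<rho>" using assms distZ_nonneg[of t] by (simp add: powr_powr)
next
  assume "distZ t \<le> M powr \<rho>"
  hence "distZ t powr (1 / \<rho>) \<le> (M powr \<rho>) powr (1 / \<rho>)"
    using assms distZ_nonneg[of t] by (intro powr_mono2) auto
  thus "rpow_comp t \<rho> \<le> M" using assms by (simp add: rpow_comp_def powr_powr)
qed

section \<open>The quasi-norm\<close>

definition rmax :: "real ^ 'd \<Rightarrow> real ^ 'd \<Rightarrow> real" where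
  "rmax r v = Max (range (\<lambda>i. rpow_comp (v $ i) (r $ i)))"

lemma rmax_ge: "rpow_comp (v $ i) (r $ i) \<le> rmax r v"
  unfolding rmax_def by (rule Max_ge) auto

lemma rmax_nonneg: "rmax r v \<ge> 0"
  using rmax_ge[of v _ r] rpow_comp_nonneg order_trans by blast

lemma rmax_le_iff: "rmax r v \<le> M \<longleftrightarrow> (\<forall>i. rpow_comp (v $ i) (r $ i) \<le> M)"
  unfolding rmax_def by (subst Max_le_iff) auto

lemma rmax_le_iff_distZ:
  assumes "\<And>i. r $ i \<ge> 0" "M \<ge> 0"
  shows "rmax r v \<le> M \<longleftrightarrow> (\<forall>i. r $ i > 0 \<longrightarrow> distZ (v $ i) \<le> M powr (r $ i))"
  unfolding rmax_le_iff
  using assms rpow_comp_le_iff[of "r $ _" M "v $ _"] by (metis less_eq_real_def rpow_comp_def)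

lemma rmax_uminus: "rmax r (- v) = rmax r v"
  by (simp add: rmax_def rpow_comp_def distZ_uminus)

lemma rnorm_eq_root: "rnorm r v = root CARD('d) (rmax r v)" for v :: "real ^ 'd"
  unfolding rnorm_def rmax_def[symmetric]
  using root_powr_inverse[of "CARD('d)" "rmax r v"] rmax_nonneg[of r v] by simp

lemma rnorm_power_card: "rnorm r v ^ CARD('d) = rmax r v" for v :: "real ^ 'd"
  unfolding rnorm_eq_root using rmax_nonneg[of r v] by simp

definition qt_const :: "real ^ 'd \<Rightarrow> real" where
  "qt_const r = (\<Sum>i\<in>UNIV. 2 powr (1 / r $ i))"

lemma qt_const_pos: "qt_const r > 0"
  unfolding qt_const_def by (intro sum_pos) auto

lemma two_le_qt_const_powr:
  assumes "r $ i > 0"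
  shows "2 \<le> qt_const r powr (r $ i)"
proof -
  have "2 powr (1 / r $ i) \<le> qt_const r"
    unfolding qt_const_def by (rule member_le_sum) auto
  hence "(2 powr (1 / r $ i)) powr (r $ i) \<le> qt_const r powr (r $ i)"
    using assms by (intro powr_mono2) auto
  thus ?thesis using assms by (simp add: powr_powr)
qed

lemma rmax_add_le:
  assumes r: "\<And>i. r $ i \<ge> 0"
  shows "rmax r (u + v) \<le> qt_const r * (rmax r u + rmax r v)"
proof -
  let ?a = "rmax r u" and ?b = "rmax r v" and ?K = "qt_const r"
  have "distZ (u $ i + v $ i) \<le> (?K * (?a + ?b)) powr (r $ i)" if ri: "r $ i > 0" for i
  proof -
    have "distZ (u $ i) \<le> ?a powr (r $ i)" "distZ (v $ i) \<le> ?b powr (r $ i)"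
      using ri rmax_le_iff_distZ[OF r rmax_nonneg] by blast+
    moreover have "?a powr (r $ i) \<le> (?a + ?b) powr (r $ i)" "?b powr (r $ i) \<le> (?a + ?b) powr (r $ i)"
      using ri rmax_nonneg[of r] by (auto intro!: powr_mono2)
    ultimately have "distZ (u $ i + v $ i) \<le> 2 * (?a + ?b) powr (r $ i)"
      using distZ_add_le[of "u $ i" "v $ i"] by linarith
    also have "\<dots> \<le> ?K powr (r $ i) * (?a + ?b) powr (r $ i)"
      using two_le_qt_const_powr[OF ri] by (intro mult_right_mono) auto
    also have "\<dots> = (?K * (?a + ?b)) powr (r $ i)"
      using qt_const_pos[of r] rmax_nonneg[of r] by (simp add: powr_mult)
    finally show ?thesis .
  qed
  thus ?thesis
    using qt_const_pos[of r] rmax_nonneg[of r]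
    by (subst rmax_le_iff_distZ[OF r]) auto
qed

section \<open>Divergent and convergent series\<close>

lemma not_summable_if_tail_lower:
  fixes a :: "nat \<Rightarrow> real"
  assumes "\<epsilon> > 0" and tail: "\<And>m. \<exists>t\<ge>2 * m. \<forall>n\<in>{m..<t}. \<epsilon> / real t \<le> a n"
  shows "\<not> summable a"
proof
  assume "summable a"
  then obtain N where N: "\<And>m n. m \<ge> N \<Longrightarrow> norm (sum a {m..<n}) < \<epsilon> / 2"
    unfolding summable_Cauchy using \<open>\<epsilon> > 0\<close> by (meson half_gt_zero)
  obtain t where t: "t \<ge> 2 * Suc N" "\<And>n. n \<in> {Suc N..<t} \<Longrightarrow> \<epsilon> / real t \<le> a n"
    using tail by blast
  have "\<epsilon> * real (2 * Suc N) \<le> \<epsilon> * real t"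
    using t(1) \<open>\<epsilon> > 0\<close> by (intro mult_left_mono) auto
  hence "\<epsilon> / 2 \<le> real (t - Suc N) * (\<epsilon> / real t)"
    using t(1) by (simp add: of_nat_diff field_simps)
  also have "\<dots> \<le> sum a {Suc N..<t}"
    using sum_bounded_below[of "{Suc N..<t}" "\<epsilon> / real t" a] t(2) by simp
  finally show False using N[of "Suc N" t] by simp
qed

definition next_in :: "nat set \<Rightarrow> nat \<Rightarrow> nat" where
  "next_in S n = (LEAST m. m \<in> S \<and> n < m)"

lemma next_in_mem_gt: "infinite S \<Longrightarrow> next_in S n \<in> S \<and> n < next_in S n"
  unfolding next_in_def infinite_nat_iff_unbounded by (rule LeastI_ex) blast

lemma next_in_le: "m \<in> S \<Longrightarrow> n < m \<Longrightarrow> next_in S n \<le> m"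
  unfolding next_in_def by (simp add: Least_le)

lemma next_in_mono: "infinite S \<Longrightarrow> n \<le> n' \<Longrightarrow> next_in S n \<le> next_in S n'"
  using next_in_mem_gt[of S n'] by (intro next_in_le) auto

lemma not_summable_inverse_next_in:
  assumes "infinite S"
  shows "\<not> summable (\<lambda>n. 1 / real (next_in S n))"
proof (rule not_summable_if_tail_lower[of 1])
  fix m
  obtain t where t: "t \<in> S" "2 * m < t"
    using assms by (auto simp: infinite_nat_iff_unbounded)
  have "1 / real t \<le> 1 / real (next_in S n)" if "n \<in> {m..<t}" for n
    using that t next_in_mem_gt[OF assms, of n] next_in_le[OF t(1), of n]
    by (intro divide_left_mono) auto
  thus "\<exists>t\<ge>2 * m. \<forall>n\<in>{m..<t}. 1 / real t \<le> 1 / real (next_in S n)"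
    using t by (intro exI[of _ t]) auto
qed simp

lemma Dfun_pos:
  assumes "\<psi> \<in> Dfun TYPE('d::finite)" "n \<ge> 1"
  shows "\<psi> n > 0"
proof (rule ccontr)
  assume "\<not> \<psi> n > 0"
  hence "\<psi> m = 0" if "m \<ge> n" for m
    using assms that unfolding Dfun_def by (smt (verit) mem_Collect_eq order_trans)
  hence "summable (\<lambda>m. \<psi> (m + n + 1) ^ CARD('d))" by (simp add: zero_power)
  hence "summable (\<lambda>m. \<psi> (m + 1) ^ CARD('d))"
    by (subst (asm) summable_iff_shift[of "\<lambda>m. \<psi> (m + 1) ^ CARD('d)" n]) (simp add: ac_simps)
  thus False using assms unfolding Dfun_def by simp
qed

lemma root_in_Dfun:
  fixes \<phi> :: "nat \<Rightarrow> real"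
  assumes "\<And>n. \<phi> n \<ge> 0" "\<And>m n. 1 \<le> m \<Longrightarrow> m \<le> n \<Longrightarrow> \<phi> n \<le> \<phi> m" "\<not> summable \<phi>"
  shows "(\<lambda>n. root CARD('d::finite) (\<phi> n)) \<in> Dfun TYPE('d)"
proof -
  have "\<not> summable (\<lambda>n. \<phi> (n + 1))"
    using assms(3) summable_iff_shift[of \<phi> 1] by simp
  moreover have "root CARD('d) (\<phi> n) ^ CARD('d) = \<phi> n" for n
    using assms(1) by (simp add: real_root_pow_pos2)
  ultimately show ?thesis using assms(1,2) by (simp add: Dfun_def)
qed

lemma sum_blocks_le:
  fixes a h :: "nat \<Rightarrow> real" and s :: "nat \<Rightarrow> nat"
  assumes "strict_mono s" "\<And>k n. s k \<le> n \<Longrightarrow> n < s (Suc k) \<Longrightarrow> a n \<le> h k"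
  shows "sum a {s 0..<s K} \<le> (\<Sum>k<K. (real (s (Suc k)) - real (s k)) * h k)"
proof (induction K)
  case (Suc K)
  have "s 0 \<le> s K" "s K \<le> s (Suc K)"
    using strict_mono_less_eq[OF assms(1)] by auto
  hence "sum a {s 0..<s (Suc K)} = sum a {s 0..<s K} + sum a {s K..<s (Suc K)}"
    by (simp add: sum.atLeastLessThan_concat)
  also have "sum a {s K..<s (Suc K)} \<le> real (card {s K..<s (Suc K)}) * h K"
    using assms(2) by (intro sum_bounded_above) auto
  also have "\<dots> = (real (s (Suc K)) - real (s K)) * h K"
    using \<open>s K \<le> s (Suc K)\<close> by (simp add: of_nat_diff)
  finally show ?case using Suc by simp
qed simp

lemma strict_mono_ge_shift:
  assumes "strict_mono s"
  shows "s 0 + k \<le> (s k :: nat)"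
proof (induction k)
  case (Suc k)
  thus ?case using strict_monoD[OF assms, of k "Suc k"] by simp
qed simp

lemma summable_if_block_bounded:
  fixes a h :: "nat \<Rightarrow> real" and s :: "nat \<Rightarrow> nat"
  assumes s: "strict_mono s" and nonneg: "\<And>n. n \<ge> s 0 \<Longrightarrow> a n \<ge> 0"
    and block: "\<And>k n. s k \<le> n \<Longrightarrow> n < s (Suc k) \<Longrightarrow> a n \<le> h k"
    and summable: "summable (\<lambda>k. (real (s (Suc k)) - real (s k)) * h k)"
  shows "summable a"
proof -
  let ?b = "\<lambda>k. (real (s (Suc k)) - real (s k)) * h k"
  have "?b k \<ge> 0" for k
  proof -
    have "s k < s (Suc k)" "s 0 \<le> s k" using s by (auto simp: strict_mono_less_eq strict_mono_less)
    thus ?thesis using nonneg[of "s k"] block[of k "s k"] by simp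
  qed
  hence bound: "(\<Sum>k<K. ?b k) \<le> suminf ?b" for K
    using summable by (intro sum_le_suminf) auto
  have "summable (\<lambda>n. a (n + s 0))"
  proof (rule summableI_nonneg_bounded)
    show "0 \<le> a (n + s 0)" for n using nonneg by simp
    fix N
    have "(\<Sum>n<N. a (n + s 0)) = sum a {s 0..<N + s 0}"
      using sum.shift_bounds_nat_ivl[of a 0 "s 0" N] by (simp add: atLeast0LessThan)
    also have "\<dots> \<le> sum a {s 0..<s N}"
      using strict_mono_ge_shift[OF s, of N] nonneg by (intro sum_mono2) auto
    also have "\<dots> \<le> suminf ?b"
      using sum_blocks_le[where a = a and h = h and K = N, OF s block] bound[of N] by linarith
    finally show "(\<Sum>n<N. a (n + s 0)) \<le> suminf ?b" .
  qed
  thus ?thesis by (simp add: summable_iff_shift)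
qed

section \<open>Badly approximable points\<close>

lemma Bad_iff: "x \<in> Bad r \<longleftrightarrow> (\<exists>c>0. \<forall>n\<ge>1. c \<le> real n * rmax r (real n *\<^sub>R x))"
proof -
  let ?f = "\<lambda>n::nat. real n * rmax r (real n *\<^sub>R x)"
  have Bad: "x \<in> Bad r \<longleftrightarrow> (INF n\<in>{1..}. ?f n) > 0"
    by (simp add: Bad_def rnorm_power_card)
  have bdd: "bdd_below (?f ` {1..})"
    by (rule bdd_belowI[of _ 0]) (auto intro!: mult_nonneg_nonneg rmax_nonneg)
  show ?thesis
  proof
    assume "x \<in> Bad r"
    thus "\<exists>c>0. \<forall>n\<ge>1. c \<le> ?f n"
      using Bad cINF_lower[OF bdd] by (intro exI[of _ "INF n\<in>{1..}. ?f n"]) auto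
  next
    assume "\<exists>c>0. \<forall>n\<ge>1. c \<le> ?f n"
    then obtain c where "c > 0" "\<And>n. n \<ge> 1 \<Longrightarrow> c \<le> ?f n" by blast
    hence "c \<le> (INF n\<in>{1..}. ?f n)" by (intro cINF_greatest) auto
    with \<open>c > 0\<close> show "x \<in> Bad r" using Bad by linarith
  qed
qed

lemma Bad_separated:
  fixes x y :: "real ^ 'd"
  assumes r: "\<And>i. r $ i \<ge> 0" and "x \<in> Bad r"
  obtains \<epsilon> where "\<epsilon> > 0"
    "\<And>m n. 1 \<le> m \<Longrightarrow> m < n \<Longrightarrow> rmax r (real n *\<^sub>R x + y) < \<epsilon> / real n
      \<Longrightarrow> \<epsilon> / real n < rmax r (real m *\<^sub>R x + y)"
proof -
  obtain c where c: "c > 0" "\<And>n. n \<ge> 1 \<Longrightarrow> c \<le> real n * rmax r (real n *\<^sub>R x)"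
    using \<open>x \<in> Bad r\<close> Bad_iff by blast
  define K where "K = qt_const r"
  have K: "K > 0" unfolding K_def by (rule qt_const_pos)
  show ?thesis
  proof (rule that)
    show "c / (2 * K) > 0" using c K by simp
    fix m n :: nat
    assume mn: "1 \<le> m" "m < n" and small: "rmax r (real n *\<^sub>R x + y) < c / (2 * K) / real n"
    let ?\<delta> = "\<lambda>k. rmax r (real k *\<^sub>R x + y)"
    have diff: "real (n - m) *\<^sub>R x = (real n *\<^sub>R x + y) + - (real m *\<^sub>R x + y)"
      using mn by (simp add: of_nat_diff scaleR_diff_left)
    have "rmax r (real (n - m) *\<^sub>R x) \<le> K * (?\<delta> n + ?\<delta> m)"
      unfolding diff K_def
      using rmax_add_le[OF r, of "real n *\<^sub>R x + y" "- (real m *\<^sub>R x + y)"]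
      by (simp only: rmax_uminus)
    have "c \<le> real (n - m) * rmax r (real (n - m) *\<^sub>R x)"
      using c(2)[of "n - m"] mn by simp
    also have "\<dots> \<le> real (n - m) * (K * (?\<delta> n + ?\<delta> m))"
      using \<open>rmax r (real (n - m) *\<^sub>R x) \<le> _\<close> by (rule mult_left_mono) simp
    also have "\<dots> \<le> real n * (K * (?\<delta> n + ?\<delta> m))"
      using K rmax_nonneg[of r] by (intro mult_right_mono) auto
    also have "\<dots> < real n * (K * (c / (2 * K) / real n + ?\<delta> m))"
      using K mn small by (intro mult_strict_left_mono) auto
    also have "\<dots> = c / 2 + real n * K * ?\<delta> m"
      using K mn by (simp add: field_simps)
    finally have "c / 2 / (real n * K) < ?\<delta> m"
      using K mn by (simp add: pos_divide_less_eq mult.commute)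
    thus "c / (2 * K) / real n < ?\<delta> m"
      by (simp add: field_simps)
  qed
qed

lemma infinite_Un_beyond: "infinite (B \<union> {n::nat. \<forall>m\<ge>n. m \<notin> B})"
proof (cases "finite B")
  case True
  then obtain N where N: "\<And>m. m \<in> B \<Longrightarrow> m < N" by (auto simp: finite_nat_set_iff_bounded)
  have "{N..} \<subseteq> {n. \<forall>m\<ge>n. m \<notin> B}"
  proof
    fix k assume "k \<in> {N..}"
    thus "k \<in> {n. \<forall>m\<ge>n. m \<notin> B}" using N by simp (meson le_trans not_less)
  qed
  thus ?thesis using infinite_Ici finite_subset by blast
next
  case False
  thus ?thesis by simp
qed

lemma finite_maximal_elements: "finite {n::nat. n \<in> B \<and> (\<forall>m>n. m \<notin> B)}"
proof (cases "finite B")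
  case False
  hence "{n. n \<in> B \<and> (\<forall>m>n. m \<notin> B)} = {}"
    unfolding infinite_nat_iff_unbounded by blast
  thus ?thesis by (metis finite.emptyI)
qed (auto elim: finite_subset[rotated])

lemma Dfun_avoiding_separated:
  fixes \<delta> :: "nat \<Rightarrow> real"
  assumes "\<epsilon> > 0"
    and sep: "\<And>m n. 1 \<le> m \<Longrightarrow> m < n \<Longrightarrow> \<delta> n < \<epsilon> / real n \<Longrightarrow> \<epsilon> / real n < \<delta> m"
  shows "\<exists>\<psi>\<in>Dfun TYPE('d::finite). finite {n. n \<ge> 1 \<and> root CARD('d) (\<delta> n) < \<psi> n}"
proof
  define B where "B = {n. n \<ge> 1 \<and> \<delta> n < \<epsilon> / real n}"
  define S where "S = B \<union> {n. \<forall>m\<ge>n. m \<notin> B}"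
  have S: "infinite S" unfolding S_def by (rule infinite_Un_beyond)
  define \<phi> where "\<phi> n = \<epsilon> * (1 / real (next_in S n))" for n
  have \<phi>: "\<phi> n \<le> \<epsilon> / real n" if "n \<ge> 1" for n
    unfolding \<phi>_def using next_in_mem_gt[OF S, of n] that \<open>\<epsilon> > 0\<close> by (simp add: divide_left_mono)
  show "(\<lambda>n. root CARD('d) (\<phi> n)) \<in> Dfun TYPE('d)"
  proof (rule root_in_Dfun)
    show "0 \<le> \<phi> n" for n using \<open>\<epsilon> > 0\<close> by (simp add: \<phi>_def)
    show "\<phi> n \<le> \<phi> m" if "1 \<le> m" "m \<le> n" for m n
      unfolding \<phi>_def using next_in_mem_gt[OF S, of m] next_in_mono[OF S that(2)] \<open>\<epsilon> > 0\<close>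
      by (intro mult_left_mono divide_left_mono) auto
    show "\<not> summable \<phi>"
      using not_summable_inverse_next_in[OF S] \<open>\<epsilon> > 0\<close>
      by (simp only: \<phi>_def[abs_def] summable_cmult_iff) simp
  qed
  have last: "n \<in> B \<and> (\<forall>m>n. m \<notin> B)"
    if "n \<ge> 1" "root CARD('d) (\<delta> n) < root CARD('d) (\<phi> n)" for n
  proof -
    have lt: "\<delta> n < \<epsilon> / real (next_in S n)" using that(2) by (simp add: \<phi>_def)
    have "n \<in> B" using lt \<phi>[OF that(1)] that(1) by (simp add: B_def \<phi>_def)
    moreover have "m \<notin> B" if "n < m" for m
    proof
      assume "m \<in> B"
      hence "next_in S n \<le> m" using \<open>n < m\<close> by (intro next_in_le) (simp add: S_def)
      moreover have "next_in S n \<in> B \<or> (\<forall>k\<ge>next_in S n. k \<notin> B)" "n < next_in S n"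
        using next_in_mem_gt[OF S, of n] by (simp_all add: S_def)
      ultimately have "next_in S n \<in> B" using \<open>m \<in> B\<close> by auto
      hence "\<epsilon> / real (next_in S n) < \<delta> n"
        using sep[of n "next_in S n"] \<open>n \<ge> 1\<close> \<open>n < next_in S n\<close> by (simp add: B_def)
      with lt show False by simp
    qed
    ultimately show ?thesis by blast
  qed
  have "finite {n. n \<in> B \<and> (\<forall>m>n. m \<notin> B)}" by (rule finite_maximal_elements)
  moreover have "{n. n \<ge> 1 \<and> root CARD('d) (\<delta> n) < root CARD('d) (\<phi> n)} \<subseteq> {n. n \<in> B \<and> (\<forall>m>n. m \<notin> B)}"
    using last by blast
  ultimately show "finite {n. n \<ge> 1 \<and> root CARD('d) (\<delta> n) < root CARD('d) (\<phi> n)}"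
    by (rule finite_subset[rotated])
qed

lemma Bad_not_in_PiSet:
  fixes x y :: "real ^ 'd"
  assumes r: "\<And>i. r $ i \<ge> 0" and "x \<in> Bad r"
  shows "(x, y) \<notin> PiSet r"
proof
  assume "(x, y) \<in> PiSet r"
  obtain \<epsilon> where "\<epsilon> > 0"
    "\<And>m n. 1 \<le> m \<Longrightarrow> m < n \<Longrightarrow> rmax r (real n *\<^sub>R x + y) < \<epsilon> / real n
      \<Longrightarrow> \<epsilon> / real n < rmax r (real m *\<^sub>R x + y)"
    using Bad_separated[OF assms] by blast
  then obtain \<psi> where "\<psi> \<in> Dfun TYPE('d)"
    and "finite {n. n \<ge> 1 \<and> root CARD('d) (rmax r (real n *\<^sub>R x + y)) < \<psi> n}"
    using Dfun_avoiding_separated[of \<epsilon> "\<lambda>n. rmax r (real n *\<^sub>R x + y)"] by blast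
  moreover have "infinite {n. n \<ge> 1 \<and> rnorm r (real n *\<^sub>R x + y) < \<psi> n}"
    using \<open>(x, y) \<in> PiSet r\<close> \<open>\<psi> \<in> Dfun TYPE('d)\<close> by (auto simp: PiSet_def Wset_def)
  ultimately show False by (simp add: rnorm_eq_root)
qed

section \<open>Weakly approximable points\<close>

lemma PiSet_if_block_summable:
  fixes x y :: "real ^ 'd" and s :: "nat \<Rightarrow> nat"
  assumes s: "strict_mono s"
    and summable: "summable (\<lambda>k. (real (s (Suc k)) - real (s k)) * rmax r (real (s k) *\<^sub>R x + y))"
  shows "(x, y) \<in> PiSet r"
  unfolding PiSet_def
proof (rule INT_I)
  fix \<psi> assume \<psi>: "\<psi> \<in> Dfun TYPE('d)"
  show "(x, y) \<in> Wset r \<psi>"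
  proof (rule ccontr)
    assume "(x, y) \<notin> Wset r \<psi>"
    then obtain M where M: "\<And>n. n \<ge> 1 \<Longrightarrow> rnorm r (real n *\<^sub>R x + y) < \<psi> n \<Longrightarrow> n < M"
      by (auto simp: Wset_def finite_nat_set_iff_bounded)
    define t where "t k = s (k + M + 1)" for k
    have t: "strict_mono t" using s by (simp add: strict_mono_def t_def)
    have t_ge: "t k \<ge> M + 1" for k using seq_suble[OF s, of "k + M + 1"] by (simp add: t_def)
    have "summable (\<lambda>n. \<psi> n ^ CARD('d))"
    proof (rule summable_if_block_bounded[OF t])
      show "0 \<le> \<psi> n ^ CARD('d)" if "t 0 \<le> n" for n
        using Dfun_pos[OF \<psi>, of n] t_ge[of 0] that by simp
      fix k n assume "t k \<le> n" "n < t (Suc k)"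
      have "\<psi> n \<le> \<psi> (t k)" using \<psi> \<open>t k \<le> n\<close> t_ge[of k] by (simp add: Dfun_def)
      moreover have "\<not> rnorm r (real (t k) *\<^sub>R x + y) < \<psi> (t k)"
        using M[of "t k"] t_ge[of k] by auto
      ultimately have "\<psi> n ^ CARD('d) \<le> rnorm r (real (t k) *\<^sub>R x + y) ^ CARD('d)"
        using Dfun_pos[OF \<psi>, of n] \<open>t k \<le> n\<close> t_ge[of k] by (intro power_mono) auto
      thus "\<psi> n ^ CARD('d) \<le> rmax r (real (t k) *\<^sub>R x + y)"
        by (simp add: rnorm_power_card)
    next
      show "summable (\<lambda>k. (real (t (Suc k)) - real (t k)) * rmax r (real (t k) *\<^sub>R x + y))"
        using summable summable_iff_shift[of
            "\<lambda>k. (real (s (Suc k)) - real (s k)) * rmax r (real (s k) *\<^sub>R x + y)" "M + 1"]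
        by (simp add: t_def)
    qed
    hence "summable (\<lambda>n. \<psi> (n + 1) ^ CARD('d))"
      using summable_iff_shift[of "\<lambda>n. \<psi> n ^ CARD('d)" 1] by simp
    thus False using \<psi> by (simp add: Dfun_def)
  qed
qed

lemma distZ_partial_sums_shift:
  fixes t e :: "nat \<Rightarrow> real"
  assumes dist: "\<And>j. distZ (t j) \<le> e j" and decay: "\<And>j. e (Suc j) \<le> e j / 2"
  shows "\<exists>y. \<forall>k. distZ ((\<Sum>j<k. t j) + y) \<le> 2 * e k"
proof -
  have "\<forall>j. \<exists>z. z \<in> \<int> \<and> distZ (t j) = \<bar>t j - z\<bar>" using distZ_attained by blast
  then obtain z where z: "\<forall>j. z j \<in> \<int> \<and> distZ (t j) = \<bar>t j - z j\<bar>"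
    by (rule choice[THEN exE])
  define E where "E j = t j - z j" for j
  have geometric: "e (j + k) \<le> (1/2)^j * e k" for j k
  proof (induction j)
    case (Suc j)
    thus ?case using decay[of "j + k"] by simp
  qed simp
  have E_le: "\<bar>E (j + k)\<bar> \<le> (1/2)^j * e k" for j k
    using z dist[of "j + k"] geometric[of j k] by (simp add: E_def)
  have halving_sums: "(\<lambda>j. (1/2)^j * e k) sums (2 * e k)" for k
    using geometric_sums[of "1/2::real"] sums_mult2[of _ _ "e k"] by force
  have E_abs_summable: "summable (\<lambda>j. \<bar>E (j + k)\<bar>)" for k
    by (rule summable_comparison_test'[OF halving_sums[THEN sums_summable, of k], where N = 0])
      (simp add: E_le)
  have E_summable: "summable E"
    using summable_rabs_cancel[OF E_abs_summable[of 0]] by simp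
  show ?thesis
  proof (intro exI allI)
    fix k
    have "(\<Sum>j<k. t j) = (\<Sum>j<k. z j) + (\<Sum>j<k. E j)"
      by (simp add: E_def sum.distrib[symmetric])
    moreover have "(\<Sum>j. E j) = (\<Sum>j. E (j + k)) + (\<Sum>j<k. E j)"
      by (rule suminf_split_initial_segment[OF E_summable])
    ultimately have "(\<Sum>j<k. t j) + - (\<Sum>j. E j) - (\<Sum>j<k. z j) = - (\<Sum>j. E (j + k))"
      by simp
    moreover have "(\<Sum>j<k. z j) \<in> \<int>" using z by (intro Ints_sum) blast
    ultimately have "distZ ((\<Sum>j<k. t j) + - (\<Sum>j. E j)) \<le> \<bar>\<Sum>j. E (j + k)\<bar>"
      using distZ_le_abs_diff[of "\<Sum>j<k. z j" "(\<Sum>j<k. t j) + - (\<Sum>j. E j)"] by simp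
    also have "\<dots> \<le> (\<Sum>j. \<bar>E (j + k)\<bar>)"
      by (rule summable_rabs[OF E_abs_summable])
    also have "\<dots> \<le> (\<Sum>j. (1/2)^j * e k)"
      by (rule suminf_le[OF E_le E_abs_summable halving_sums[THEN sums_summable]])
    also have "\<dots> = 2 * e k"
      by (rule sums_unique[OF halving_sums, symmetric])
    finally show "distZ ((\<Sum>j<k. t j) + - (\<Sum>j. E j)) \<le> 2 * e k" .
  qed
qed

lemma rmax_partial_sums_shift:
  fixes x :: "real ^ 'd" and q :: "nat \<Rightarrow> nat" and g :: "nat \<Rightarrow> real"
  assumes r: "\<And>i. r $ i \<ge> 0"
    and g: "\<And>j. rmax r (real (q j) *\<^sub>R x) \<le> g j"
    and decay: "\<And>j. qt_const r * g (Suc j) \<le> g j"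
  shows "\<exists>y. \<forall>k. rmax r (real (\<Sum>j<k. q j) *\<^sub>R x + y) \<le> qt_const r * g k"
proof -
  define K where "K = qt_const r"
  have K: "K > 0" unfolding K_def by (rule qt_const_pos)
  have g_nonneg: "g j \<ge> 0" for j using g[of j] rmax_nonneg[of r] order_trans by blast
  have "\<exists>yi. \<forall>k. distZ ((\<Sum>j<k. real (q j) * x $ i) + yi) \<le> 2 * g k powr (r $ i)"
    if ri: "r $ i > 0" for i
  proof (rule distZ_partial_sums_shift)
    show "distZ (real (q j) * x $ i) \<le> g j powr (r $ i)" for j
      using g[of j] ri rmax_le_iff_distZ[OF r g_nonneg[of j]] by simp
    show "g (Suc j) powr (r $ i) \<le> g j powr (r $ i) / 2" for j
    proof -
      have "g (Suc j) powr (r $ i) \<le> (g j / K) powr (r $ i)"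
        using decay[of j] K g_nonneg ri by (intro powr_mono2) (auto simp: K_def field_simps)
      also have "\<dots> = g j powr (r $ i) / K powr (r $ i)"
        using K g_nonneg by (simp add: powr_divide)
      also have "\<dots> \<le> g j powr (r $ i) / 2"
        using two_le_qt_const_powr[OF ri] by (intro divide_left_mono) (auto simp: K_def)
      finally show ?thesis .
    qed
  qed
  then obtain Y where Y: "\<And>i k. r $ i > 0 \<Longrightarrow> distZ ((\<Sum>j<k. real (q j) * x $ i) + Y i) \<le> 2 * g k powr (r $ i)"
    by metis
  show ?thesis
  proof (intro exI allI)
    fix k
    have "distZ ((real (\<Sum>j<k. q j) *\<^sub>R x + (\<chi> i. Y i)) $ i) \<le> (K * g k) powr (r $ i)"
      if ri: "r $ i > 0" for i
    proof -
      have "distZ ((real (\<Sum>j<k. q j) *\<^sub>R x + (\<chi> i. Y i)) $ i) \<le> 2 * g k powr (r $ i)"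
        using Y[OF ri, of k] by (simp add: sum_distrib_right)
      also have "\<dots> \<le> K powr (r $ i) * g k powr (r $ i)"
        using two_le_qt_const_powr[OF ri] by (intro mult_right_mono) (auto simp: K_def)
      also have "\<dots> = (K * g k) powr (r $ i)"
        using K g_nonneg by (simp add: powr_mult)
      finally show ?thesis .
    qed
    thus "rmax r (real (\<Sum>j<k. q j) *\<^sub>R x + (\<chi> i. Y i)) \<le> qt_const r * g k"
      using K g_nonneg[of k] by (subst rmax_le_iff_distZ[OF r]) (auto simp: K_def)
  qed
qed

lemma not_Bad_denominators:
  fixes x :: "real ^ 'd"
  assumes "x \<notin> Bad r" and pos: "\<And>q. q \<ge> 1 \<Longrightarrow> rmax r (real q *\<^sub>R x) > 0" and "c > 0"
  obtains q where "\<And>j. q j \<ge> 1" "\<And>j. real (q j) * rmax r (real (q j) *\<^sub>R x) < (1/2)^j"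
    "\<And>j. rmax r (real (q (Suc j)) *\<^sub>R x) \<le> c * rmax r (real (q j) *\<^sub>R x)"
proof -
  let ?G = "\<lambda>q. rmax r (real q *\<^sub>R x)"
  have small: "\<exists>q\<ge>1. real q * ?G q < \<epsilon>" if "\<epsilon> > 0" for \<epsilon>
    using assms(1) that Bad_iff[of x r] by (meson not_less)
  have "\<exists>q. \<forall>j. (q j \<ge> 1 \<and> real (q j) * ?G (q j) < (1/2)^j) \<and> ?G (q (Suc j)) \<le> c * ?G (q j)"
  proof (rule dependent_nat_choice)
    show "\<exists>u. u \<ge> 1 \<and> real u * ?G u < (1/2)^0" using small[of 1] by simp
  next
    fix v j assume v: "v \<ge> 1 \<and> real v * ?G v < (1/2)^j"
    have "min ((1/2)^Suc j) (c * ?G v) > 0" using pos v \<open>c > 0\<close> by simp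
    then obtain u where u: "u \<ge> 1" "real u * ?G u < min ((1/2)^Suc j) (c * ?G v)"
      using small by blast
    have "?G u \<le> real u * ?G u"
      using u(1) rmax_nonneg[of r "real u *\<^sub>R x"] by (intro mult_le_cancel_right1[THEN iffD2]) simp
    thus "\<exists>u. (u \<ge> 1 \<and> real u * ?G u < (1/2)^Suc j) \<and> ?G u \<le> c * ?G v"
      using u by (intro exI[of _ u]) auto
  qed
  thus ?thesis using that by blast
qed

lemma PiSet_if_rmax_zero:
  fixes x :: "real ^ 'd"
  assumes r: "\<And>i. r $ i \<ge> 0" and "q \<ge> 1" and q: "rmax r (real q *\<^sub>R x) = 0"
  shows "(x, 0) \<in> PiSet r"
proof -
  have zero: "rmax r (real (m * q) *\<^sub>R x) = 0" for m
  proof -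
    have "real q * x $ i \<in> \<int>" if "r $ i > 0" for i
      using q that rmax_le_iff_distZ[OF r, of 0 "real q *\<^sub>R x"] distZ_nonneg[of "real q * x $ i"]
      by (simp add: distZ_eq_0_iff[symmetric] order_antisym)
    hence "distZ (real (m * q) * x $ i) \<le> 0" if "r $ i > 0" for i
      using that distZ_eq_0_iff[of "real m * (real q * x $ i)"] by (simp add: mult.assoc)
    hence "rmax r (real (m * q) *\<^sub>R x) \<le> 0"
      using rmax_le_iff_distZ[OF r, of 0] by simp
    thus ?thesis using rmax_nonneg[of r] by (simp add: order_antisym)
  qed
  show ?thesis
    unfolding PiSet_def
  proof (rule INT_I)
    fix \<psi> assume "\<psi> \<in> Dfun TYPE('d)"
    have "(m + 1) * q \<in> {n. n \<ge> 1 \<and> rnorm r (real n *\<^sub>R x + 0) < \<psi> n}" for m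
      using zero[of "m + 1"] Dfun_pos[OF \<open>\<psi> \<in> Dfun TYPE('d)\<close>] \<open>q \<ge> 1\<close>
      by (simp add: rnorm_eq_root)
    moreover have "m \<le> (m + 1) * q" for m
      using mult_le_mono2[OF \<open>q \<ge> 1\<close>, of "m + 1"] by simp
    ultimately have "infinite {n. n \<ge> 1 \<and> rnorm r (real n *\<^sub>R x + 0) < \<psi> n}"
      unfolding infinite_nat_iff_unbounded_le by blast
    thus "(x, 0) \<in> Wset r \<psi>" by (simp add: Wset_def)
  qed
qed

lemma fst_PiSet_if_not_Bad:
  fixes x :: "real ^ 'd"
  assumes r: "\<And>i. r $ i \<ge> 0" and "x \<notin> Bad r"
  shows "\<exists>y. (x, y) \<in> PiSet r"
proof (cases "\<exists>q\<ge>1. rmax r (real q *\<^sub>R x) = 0")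
  case True
  thus ?thesis using PiSet_if_rmax_zero[OF r] by blast
next
  case False
  hence "rmax r (real q *\<^sub>R x) > 0" if "q \<ge> 1" for q
    using that rmax_nonneg[of r] by (metis less_eq_real_def)
  moreover define K where "K = qt_const r"
  moreover have K: "K > 0" unfolding K_def by (rule qt_const_pos)
  ultimately obtain q where q: "\<And>j. q j \<ge> 1"
    and small: "\<And>j. real (q j) * rmax r (real (q j) *\<^sub>R x) < (1/2)^j"
    and decay: "\<And>j. rmax r (real (q (Suc j)) *\<^sub>R x) \<le> 1 / K * rmax r (real (q j) *\<^sub>R x)"
    using not_Bad_denominators[OF \<open>x \<notin> Bad r\<close>, of "1 / K"] by auto
  obtain y where y: "\<And>k. rmax r (real (\<Sum>j<k. q j) *\<^sub>R x + y) \<le> K * rmax r (real (q k) *\<^sub>R x)"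
    using rmax_partial_sums_shift[OF r, of q x "\<lambda>j. rmax r (real (q j) *\<^sub>R x)"] decay K
    by (auto simp: K_def field_simps)
  define s where "s k = (\<Sum>j<k. q j)" for k
  have "strict_mono s"
    using q by (intro strict_mono_Suc_iff[THEN iffD2]) (auto simp: s_def Suc_le_eq)
  moreover have "summable (\<lambda>k. (real (s (Suc k)) - real (s k)) * rmax r (real (s k) *\<^sub>R x + y))"
  proof (rule summable_comparison_test'[where N = 0])
    show "summable (\<lambda>k. K * (1/2)^k)" by simp
    fix k
    have "real (q k) * rmax r (real (s k) *\<^sub>R x + y) \<le> real (q k) * (K * rmax r (real (q k) *\<^sub>R x))"
      using y[of k] by (intro mult_left_mono) (auto simp: s_def)
    also have "\<dots> \<le> K * (1/2)^k"
      using small[of k] K by (simp add: algebra_simps)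
    finally show "norm ((real (s (Suc k)) - real (s k)) * rmax r (real (s k) *\<^sub>R x + y)) \<le> K * (1/2)^k"
      using rmax_nonneg[of r] by (simp add: s_def)
  qed
  ultimately show ?thesis using PiSet_if_block_summable by blast
qed

theorem theorem14:
  fixes r :: "real ^ 'd"
  assumes "r \<in> weights"
  shows "WA r = fst ` PiSet r \<and> Bad r = UNIV - fst ` PiSet r"
proof -
  have r: "\<And>i. r $ i \<ge> 0" using assms by (simp add: weights_def)
  have "x \<in> fst ` PiSet r \<longleftrightarrow> x \<notin> Bad r" for x
    using fst_PiSet_if_not_Bad[OF r, of x] Bad_not_in_PiSet[OF r, of x] by force
  thus ?thesis by (auto simp: WA_def)
qed

end
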